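(* Let $\mathcal{X}$ be a finite set and $\underline{Q}$ a lower transition rate operator on $\mathcal{L}(\mathcal{X})$. Then for any $t>0$: $\underline{Q}$ is ergodic if and only if $\underline{T}_t$ is ergodic.
   Context: $\mathcal{L}(\mathcal{X})$ is the set of real-valued functions on $\mathcal{X}$ with pointwise operations and order, real constants identified with constant functions, $\mathbb{I}_y$ the indicator of $\{y\}$. A lower transition rate operator is a map $\underline{Q}\colon\mathcal{L}(\mathcal{X})\to\mathcal{L}(\mathcal{X})$ such that for all $f,g$, $\lambda\ge0$, $\mu\in\mathbb{R}$, $x,y\in\mathcal{X}$: $\underline{Q}(\mu)=0$; $\underline{Q}(f+g)\ge\underline{Q}f+\underline{Q}g$; $\underline{Q}(\lambda f)=\lambda\underline{Q}f$; $x\ne y\Rightarrow\underline{Q}(\mathbb{I}_y)(x)\ge0$. For each $f$, $t\mapsto\underline{T}_tf$ is the unique solution on $[0,\infty)$ of $\frac{d}{dt}\underline{T}_tf=\underline{Q}\,\underline{T}_tf$ with $\underline{T}_0f=f$ (existence and uniqueness are known); $\underline{T}_t$ denotes the operator $f\mapsto\underline{T}_tf$. $\underline{Q}$ is ergodic if for all $f$, $\lim_{t\to\infty}\underline{T}_tf$ exists and is a constant function. A map $\underline{T}\colon\mathcal{L}(\mathcal{X})\to\mathcal{L}(\mathcal{X})$ (here $\underline{T}=\underline{T}_t$) is ergodic if for all $f$, $\lim_{n\to\infty}\underline{T}^nf$ exists and is a constant function, where $\underline{T}^n$ is the $n$-fold composition. *)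

theory Defs
  imports "HOL-Analysis.Analysis"
begin

text \<open>Functions on a finite state space 'x are represented as 'x \<Rightarrow> real,
with pointwise operations, pointwise order and the product topology
(which for finite 'x is the usual topology of pointwise convergence).\<close>

definition lower_rate_op :: "(('x \<Rightarrow> real) \<Rightarrow> ('x \<Rightarrow> real)) \<Rightarrow> bool" where
  "lower_rate_op Q \<longleftrightarrow>
     (\<forall>\<mu>::real. Q (\<lambda>_. \<mu>) = (\<lambda>_. 0)) \<and>
     (\<forall>f g x. Q (\<lambda>z. f z + g z) x \<ge> Q f x + Q g x) \<and>
     (\<forall>(l::real) f. l \<ge> 0 \<longrightarrow> Q (\<lambda>x. l * f x) = (\<lambda>x. l * Q f x)) \<and>
     (\<forall>x y. x \<noteq> y \<longrightarrow> Q (\<lambda>z. if z = y then 1 else 0) x \<ge> 0)"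

definition is_lower_sol :: "(('x \<Rightarrow> real) \<Rightarrow> ('x \<Rightarrow> real)) \<Rightarrow> ('x \<Rightarrow> real) \<Rightarrow> (real \<Rightarrow> 'x \<Rightarrow> real) \<Rightarrow> bool" where
  "is_lower_sol Q f g \<longleftrightarrow> g 0 = f \<and>
     (\<forall>t\<ge>0. \<forall>x. ((\<lambda>s. g s x) has_real_derivative Q (g t) x) (at t within {0..}))"

text \<open>The lower transition operator T_t: value at time t of the (unique on [0,\<infinity>)) solution.\<close>
definition lower_T :: "(('x \<Rightarrow> real) \<Rightarrow> ('x \<Rightarrow> real)) \<Rightarrow> real \<Rightarrow> ('x \<Rightarrow> real) \<Rightarrow> ('x \<Rightarrow> real)" where
  "lower_T Q t f = (SOME g. is_lower_sol Q f g) t"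

definition ergodic_rate :: "(('x \<Rightarrow> real) \<Rightarrow> ('x \<Rightarrow> real)) \<Rightarrow> bool" where
  "ergodic_rate Q \<longleftrightarrow> (\<forall>f. \<exists>c::real. ((\<lambda>t. lower_T Q t f) \<longlongrightarrow> (\<lambda>_. c)) at_top)"

definition ergodic_op :: "(('x \<Rightarrow> real) \<Rightarrow> ('x \<Rightarrow> real)) \<Rightarrow> bool" where
  "ergodic_op T \<longleftrightarrow> (\<forall>f. \<exists>c::real. ((\<lambda>n. (T ^^ n) f) \<longlongrightarrow> (\<lambda>_. c)) sequentially)"

end

theory Submission
  imports Defs
begin

text \<open>
  On a finite state space a lower transition rate operator is Lipschitz for the \<open>\<ell>\<^sub>1\<close>-norm, so
  the defining differential equation is well posed: Picard iteration yields a solution and a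
  Gronwall estimate yields uniqueness and continuous dependence on the initial value, uniformly
  on bounded time intervals. Uniqueness makes \<open>T\<^sub>s\<close> a semigroup fixing the constants, so
  \<open>T\<^sub>t\<^sup>n = T\<^sub>n\<^sub>t\<close>. Ergodicity of \<open>Q\<close> therefore gives that of \<open>T\<^sub>t\<close> along the sequence \<open>nt\<close>.
  Conversely, writing \<open>s = nt + r\<close> with \<open>0 \<le> r < t\<close>, the distance of \<open>T\<^sub>s f = T\<^sub>r(T\<^sub>n\<^sub>t f)\<close> from
  the constant \<open>c = T\<^sub>r c\<close> is bounded by a fixed multiple of the distance of \<open>T\<^sub>n\<^sub>t f\<close> from \<open>c\<close>.
\<close>

lemma tendsto_fun_iff:
  "((f :: 'b \<Rightarrow> 'x \<Rightarrow> real) \<longlongrightarrow> l) F \<longleftrightarrow> (\<forall>i. ((\<lambda>c. f c i) \<longlongrightarrow> l i) F)"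
proof -
  have "(f \<longlongrightarrow> l) F \<longleftrightarrow> limitin (product_topology (\<lambda>i. euclidean) UNIV) f l F"
    by (simp add: euclidean_product_topology limitin_canonical_iff)
  also have "\<dots> \<longleftrightarrow> (\<forall>i. ((\<lambda>c. f c i) \<longlongrightarrow> l i) F)"
    by (simp add: limitin_componentwise limitin_canonical_iff)
  finally show ?thesis .
qed

lemma at_within_atLeast_eq_atLeastAtMost:
  "a \<le> t \<Longrightarrow> at t within {a::real..} = at t within {a..t+1}"
  by (rule at_within_nhd[where S="{..<t+1}"]) auto

lemma continuous_on_atLeast_if_atLeastAtMost:
  assumes "\<And>b. a \<le> b \<Longrightarrow> continuous_on {a..b} h"
  shows "continuous_on {a::real..} h"
  unfolding continuous_on_eq_continuous_within
proof
  fix t assume "t \<in> {a..}"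
  then show "continuous (at t within {a..}) h"
    using assms[of "t+1"] at_within_atLeast_eq_atLeastAtMost[of a t]
    by (simp add: continuous_on_eq_continuous_within)
qed

lemma integral_has_real_derivative_atLeast:
  assumes "continuous_on {a::real..} F" "a \<le> t"
  shows "((\<lambda>s. integral {a..s} F) has_real_derivative F t) (at t within {a..})"
  using integral_has_real_derivative[of a "t+1" F t] assms continuous_on_subset[OF assms(1)]
    at_within_atLeast_eq_atLeastAtMost[of a t]
  by auto

lemma has_integral_power:
  assumes "a \<le> b"
  shows "((\<lambda>r::real. r ^ m) has_integral (b ^ Suc m - a ^ Suc m) / Suc m) {a..b}"
proof -
  have "((\<lambda>r. r ^ m) has_integral b ^ Suc m / Suc m - a ^ Suc m / Suc m) {a..b}"
  proof (rule fundamental_theorem_of_calculus[OF assms])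
    fix x :: real
    have "((\<lambda>r. r ^ Suc m / Suc m) has_real_derivative x ^ m) (at x within {a..b})"
      by (rule derivative_eq_intros refl | simp)+
    then show "((\<lambda>r. r ^ Suc m / Suc m) has_vector_derivative x ^ m) (at x within {a..b})"
      by (simp add: has_real_derivative_iff_has_vector_derivative)
  qed
  then show ?thesis
    by (simp add: diff_divide_distrib)
qed

lemma gronwall_exp_bound:
  fixes V V' :: "real \<Rightarrow> real"
  assumes deriv: "\<And>r. 0 \<le> r \<Longrightarrow> (V has_real_derivative V' r) (at r within {0..})"
    and growth: "\<And>r. 0 \<le> r \<Longrightarrow> V' r \<le> K * V r"
    and "0 \<le> s"
  shows "V s \<le> exp (K * s) * V 0"
proof -
  define W where "W r = exp (- (K * r)) * V r" for r
  have dW: "(W has_real_derivative exp (- (K * r)) * (V' r - K * V r)) (at r within {0..})"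
    if "0 \<le> r" for r
    unfolding W_def by (rule derivative_eq_intros deriv that refl | simp add: algebra_simps)+
  have cont: "continuous_on {0..s} W"
    by (rule DERIV_continuous_on[where D="\<lambda>r. exp (- (K * r)) * (V' r - K * V r)"])
       (auto intro: has_field_derivative_subset[OF dW])
  have "W s \<le> W 0"
  proof (rule DERIV_nonpos_imp_decreasing_open[OF \<open>0 \<le> s\<close> _ cont])
    fix r :: real assume "0 < r" "r < s"
    moreover have "at r within {0..} = at r"
      using \<open>0 < r\<close> by (intro at_within_nhd[where S="{0<..}"]) auto
    ultimately show "\<exists>y. (W has_real_derivative y) (at r) \<and> y \<le> 0"
      using dW[of r] growth[of r] by (auto intro!: exI mult_nonneg_nonpos)
  qed
  then show ?thesis
    by (simp add: W_def exp_minus field_simps)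
qed

lemma filterlim_nat_floor_divide_at_top:
  assumes "0 < t"
  shows "filterlim (\<lambda>s::real. nat \<lfloor>s / t\<rfloor>) sequentially at_top"
proof -
  have "filterlim (\<lambda>s. inverse t * s) at_top at_top"
    using assms by (intro filterlim_tendsto_pos_mult_at_top[OF tendsto_const] filterlim_ident) auto
  then have "filterlim (\<lambda>s. s / t) at_top at_top"
    by (simp add: divide_inverse mult.commute)
  then show ?thesis
    using filterlim_compose[OF filterlim_nat_sequentially filterlim_compose[OF filterlim_floor_sequentially]]
    by blast
qed

definition l1_norm :: "('x::finite \<Rightarrow> real) \<Rightarrow> real" where
  "l1_norm h = (\<Sum>y\<in>UNIV. \<bar>h y\<bar>)"

lemma abs_le_l1_norm: "\<bar>h x\<bar> \<le> l1_norm h"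
  unfolding l1_norm_def by (rule member_le_sum) auto

lemma l1_norm_le_card_mult:
  "(\<And>x. \<bar>h x\<bar> \<le> c) \<Longrightarrow> l1_norm h \<le> real CARD('x) * c" for h :: "'x::finite \<Rightarrow> real"
  unfolding l1_norm_def using sum_mono[of UNIV "\<lambda>x. \<bar>h x\<bar>" "\<lambda>_. c"] by simp

locale lower_rate_operator =
  fixes Q :: "('x::finite \<Rightarrow> real) \<Rightarrow> ('x \<Rightarrow> real)"
  assumes lower_rate_op: "lower_rate_op Q"
begin

lemma Q_const: "Q (\<lambda>_. c) = (\<lambda>_. 0)"
  using lower_rate_op unfolding lower_rate_op_def by blast

lemma Q_superadditive: "Q f x + Q g x \<le> Q (\<lambda>z. f z + g z) x"
  using lower_rate_op unfolding lower_rate_op_def by blast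

lemma Q_pos_homogeneous: "0 \<le> c \<Longrightarrow> Q (\<lambda>z. c * f z) = (\<lambda>x. c * Q f x)"
  using lower_rate_op unfolding lower_rate_op_def by blast

lemma sum_Q_le_Q_sum: "finite A \<Longrightarrow> (\<Sum>y\<in>A. Q (\<phi> y) x) \<le> Q (\<lambda>z. \<Sum>y\<in>A. \<phi> y z) x"
proof (induction A rule: finite_induct)
  case empty
  then show ?case using Q_const[of 0] by simp
next
  case (insert a A)
  then show ?case
    using Q_superadditive[of "\<phi> a" x "\<lambda>z. \<Sum>y\<in>A. \<phi> y z"] by simp
qed

definition lip :: real where
  "lip = (\<Sum>x\<in>UNIV. \<Sum>y\<in>UNIV. \<bar>Q (indicator {y}) x\<bar> + \<bar>Q (\<lambda>z. - indicator {y} z) x\<bar>)"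

lemma lip_nonneg: "0 \<le> lip"
  unfolding lip_def by (intro sum_nonneg) auto

lemma Q_indicator_le_lip: "\<bar>Q (indicator {y}) x\<bar> + \<bar>Q (\<lambda>z. - indicator {y} z) x\<bar> \<le> lip"
proof -
  let ?q = "\<lambda>x y. \<bar>Q (indicator {y}) x\<bar> + \<bar>Q (\<lambda>z. - indicator {y} z) x\<bar>"
  have "?q x y \<le> (\<Sum>y\<in>UNIV. ?q x y)"
    by (rule member_le_sum) auto
  also have "\<dots> \<le> lip"
    unfolding lip_def by (rule member_le_sum[of x UNIV "\<lambda>x. \<Sum>y\<in>UNIV. ?q x y"]) (auto intro: sum_nonneg)
  finally show ?thesis .
qed

lemma Q_scaled_indicator_ge: "- \<bar>c\<bar> * lip \<le> Q (\<lambda>z. c * indicator {y} z) x"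
proof (cases "0 \<le> c")
  case True
  have "- lip \<le> Q (indicator {y}) x"
    using Q_indicator_le_lip[of y x] by linarith
  then have "- \<bar>c\<bar> * lip \<le> c * Q (indicator {y}) x"
    using mult_left_mono[of "- lip" _ c] True by simp
  then show ?thesis
    using Q_pos_homogeneous[OF True, of "indicator {y}"] by simp
next
  case False
  have "- lip \<le> Q (\<lambda>z. - indicator {y} z) x"
    using Q_indicator_le_lip[of y x] by linarith
  then have "- \<bar>c\<bar> * lip \<le> (- c) * Q (\<lambda>z. - indicator {y} z) x"
    using mult_left_mono[of "- lip" _ "- c"] False by simp
  then show ?thesis
    using Q_pos_homogeneous[of "- c" "\<lambda>z. - indicator {y} z"] False by simp
qed

lemma Q_ge_l1_norm: "- lip * l1_norm h \<le> Q h x"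
proof -
  have decomp: "h = (\<lambda>z. \<Sum>y\<in>UNIV. h y * indicator {y} z)"
    by (simp add: indicator_def)
  have "- lip * l1_norm h = (\<Sum>y\<in>UNIV. - \<bar>h y\<bar> * lip)"
    by (simp add: l1_norm_def sum_distrib_left sum_negf mult.commute)
  also have "\<dots> \<le> (\<Sum>y\<in>UNIV. Q (\<lambda>z. h y * indicator {y} z) x)"
    by (intro sum_mono Q_scaled_indicator_ge)
  also have "\<dots> \<le> Q h x"
    by (subst (2) decomp) (rule sum_Q_le_Q_sum, simp)
  finally show ?thesis .
qed

lemma Q_lipschitz: "\<bar>Q f x - Q g x\<bar> \<le> lip * l1_norm (\<lambda>z. f z - g z)"
proof -
  have "Q g x + Q (\<lambda>z. f z - g z) x \<le> Q f x"
    using Q_superadditive[of g x "\<lambda>z. f z - g z"] by simp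
  moreover have "Q f x + Q (\<lambda>z. g z - f z) x \<le> Q g x"
    using Q_superadditive[of f x "\<lambda>z. g z - f z"] by simp
  moreover have "l1_norm (\<lambda>z. g z - f z) = l1_norm (\<lambda>z. f z - g z)"
    unfolding l1_norm_def by (simp add: abs_minus_commute)
  then have "- lip * l1_norm (\<lambda>z. f z - g z) \<le> Q (\<lambda>z. g z - f z) x"
    using Q_ge_l1_norm[of "\<lambda>z. g z - f z" x] by simp
  ultimately show ?thesis
    using Q_ge_l1_norm[of "\<lambda>z. f z - g z" x] unfolding abs_le_iff by linarith
qed

lemma continuous_on_Q:
  assumes "\<And>y. continuous_on S (\<lambda>r. g r y)"
  shows "continuous_on S (\<lambda>r. Q (g r) x)"
  unfolding continuous_on_def
proof
  fix a assume a: "a \<in> S"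
  have "((\<lambda>r. lip * l1_norm (\<lambda>z. g r z - g a z)) \<longlongrightarrow> lip * l1_norm (\<lambda>z. g a z - g a z)) (at a within S)"
    unfolding l1_norm_def
    by (intro tendsto_intros) (use assms a in \<open>auto simp: continuous_on_def\<close>)
  then have "((\<lambda>r. lip * l1_norm (\<lambda>z. g r z - g a z)) \<longlongrightarrow> 0) (at a within S)"
    by (simp add: l1_norm_def)
  then have "((\<lambda>r. Q (g r) x - Q (g a) x) \<longlongrightarrow> 0) (at a within S)"
    by (rule Lim_null_comparison[rotated]) (auto intro!: always_eventually simp: Q_lipschitz)
  then show "((\<lambda>r. Q (g r) x) \<longlongrightarrow> Q (g a) x) (at a within S)"
    by (rule LIM_zero_cancel)
qed

lemma uniform_limit_Q:
  assumes "\<And>y. uniform_limit S (\<lambda>k r. g k r y) (\<lambda>r. G r y) F"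
  shows "uniform_limit S (\<lambda>k r. Q (g k r) x) (\<lambda>r. Q (G r) x) F"
proof (rule uniform_limitI)
  fix e :: real assume "0 < e"
  define \<delta> where "\<delta> = e / (lip * CARD('x) + 1)"
  have "0 < lip * CARD('x) + 1"
    using lip_nonneg by (simp add: add_nonneg_pos)
  then have "0 < \<delta>" "\<delta> * (lip * CARD('x) + 1) = e"
    using \<open>0 < e\<close> by (simp_all add: \<delta>_def)
  then have "lip * (CARD('x) * \<delta>) < e"
    by (simp add: algebra_simps)
  have "\<forall>\<^sub>F k in F. \<forall>y. \<forall>r\<in>S. dist (g k r y) (G r y) < \<delta>"
    by (rule eventually_all_finite) (rule uniform_limitD[OF assms \<open>0 < \<delta>\<close>])
  then show "\<forall>\<^sub>F k in F. \<forall>r\<in>S. dist (Q (g k r) x) (Q (G r) x) < e"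
  proof eventually_elim
    case (elim k)
    show ?case
    proof
      fix r assume "r \<in> S"
      then have "l1_norm (\<lambda>z. g k r z - G r z) \<le> CARD('x) * \<delta>"
        using elim by (intro l1_norm_le_card_mult) (auto simp: dist_real_def less_imp_le)
      then have "dist (Q (g k r) x) (Q (G r) x) \<le> lip * (CARD('x) * \<delta>)"
        using Q_lipschitz[of "g k r" x "G r"] lip_nonneg
        by (auto simp: dist_real_def intro: order_trans mult_left_mono)
      then show "dist (Q (g k r) x) (Q (G r) x) < e"
        using \<open>lip * (CARD('x) * \<delta>) < e\<close> by linarith
    qed
  qed
qed

lemma sum_diff_mult_Q_diff_le:
  "(\<Sum>x\<in>UNIV. (f x - g x) * (Q f x - Q g x)) \<le> lip * CARD('x) * (\<Sum>x\<in>UNIV. (f x - g x)\<^sup>2)"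
proof -
  define h where "h x = f x - g x" for x
  have "(\<Sum>x\<in>UNIV. h x * (Q f x - Q g x)) \<le> (\<Sum>x\<in>UNIV. \<bar>h x\<bar> * (lip * l1_norm h))"
  proof (rule sum_mono)
    fix x
    have "h x * (Q f x - Q g x) \<le> \<bar>h x\<bar> * \<bar>Q f x - Q g x\<bar>"
      by (simp flip: abs_mult)
    also have "\<dots> \<le> \<bar>h x\<bar> * (lip * l1_norm h)"
      unfolding h_def by (intro mult_left_mono Q_lipschitz) auto
    finally show "h x * (Q f x - Q g x) \<le> \<bar>h x\<bar> * (lip * l1_norm h)" .
  qed
  also have "\<dots> = lip * (l1_norm h)\<^sup>2"
    by (simp add: l1_norm_def power2_eq_square sum_distrib_left sum_distrib_right algebra_simps)
  also have "\<dots> \<le> lip * (CARD('x) * (\<Sum>x\<in>UNIV. (h x)\<^sup>2))"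
    using sum_squared_le_sum_of_squares[of "\<lambda>x. \<bar>h x\<bar>" UNIV] lip_nonneg
    by (intro mult_left_mono) (auto simp: l1_norm_def mult.commute)
  finally show ?thesis by (simp add: h_def algebra_simps)
qed

lemma lower_sol_dist_sq_le:
  assumes sol_u: "is_lower_sol Q f u" and sol_v: "is_lower_sol Q g v" and "0 \<le> s"
  shows "(\<Sum>x\<in>UNIV. (u s x - v s x)\<^sup>2) \<le> exp (2 * lip * CARD('x) * s) * (\<Sum>x\<in>UNIV. (f x - g x)\<^sup>2)"
proof -
  define V where "V r = (\<Sum>x\<in>UNIV. (u r x - v r x)\<^sup>2)" for r
  define V' where "V' r = 2 * (\<Sum>x\<in>UNIV. (u r x - v r x) * (Q (u r) x - Q (v r) x))" for r
  have "(V has_real_derivative V' r) (at r within {0..})" if "0 \<le> r" for r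
    using sol_u sol_v that unfolding V_def V'_def is_lower_sol_def
    by (auto intro!: derivative_eq_intros sum.cong simp: sum_distrib_left power2_eq_square algebra_simps)
  moreover have "V' r \<le> 2 * lip * CARD('x) * V r" for r
    using sum_diff_mult_Q_diff_le[of "u r" "v r"] by (simp add: V_def V'_def)
  ultimately have "V s \<le> exp (2 * lip * CARD('x) * s) * V 0"
    by (rule gronwall_exp_bound[OF _ _ \<open>0 \<le> s\<close>])
  then show ?thesis
    using sol_u sol_v by (simp add: V_def is_lower_sol_def)
qed

lemma lower_sol_dist_le:
  assumes "is_lower_sol Q f u" "is_lower_sol Q g v" "0 \<le> s"
  shows "\<bar>u s x - v s x\<bar> \<le> sqrt (exp (2 * lip * CARD('x) * s) * (\<Sum>x\<in>UNIV. (f x - g x)\<^sup>2))"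
proof -
  have "(u s x - v s x)\<^sup>2 \<le> (\<Sum>x\<in>UNIV. (u s x - v s x)\<^sup>2)"
    by (rule member_le_sum) auto
  also note lower_sol_dist_sq_le[OF assms]
  finally show ?thesis by (metis real_le_rsqrt power2_abs)
qed

lemma lower_sol_unique:
  assumes "is_lower_sol Q f u" "is_lower_sol Q f v" "0 \<le> s"
  shows "u s = v s"
  using lower_sol_dist_le[OF assms] by fastforce

primrec picard :: "('x \<Rightarrow> real) \<Rightarrow> nat \<Rightarrow> real \<Rightarrow> 'x \<Rightarrow> real" where
  "picard f 0 = (\<lambda>s. f)"
| "picard f (Suc k) = (\<lambda>s x. f x + integral {0..s} (\<lambda>r. Q (picard f k r) x))"

declare picard.simps(2) [simp del]

lemma picard_Suc: "picard f (Suc k) s x = f x + integral {0..s} (\<lambda>r. Q (picard f k r) x)"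
  by (simp add: picard.simps(2))

lemma continuous_on_picard: "continuous_on {0..} (\<lambda>s. picard f k s x)"
proof (induction k arbitrary: x)
  case 0
  then show ?case by simp
next
  case (Suc k)
  have "continuous_on {0..} (\<lambda>r. Q (picard f k r) x)"
    by (rule continuous_on_Q) (rule Suc.IH)
  then have "continuous_on {0..} (\<lambda>s. integral {0..s} (\<lambda>r. Q (picard f k r) x))"
    by (rule DERIV_continuous_on[OF integral_has_real_derivative_atLeast]) auto
  then show ?case
    by (auto intro!: continuous_intros simp: picard_Suc)
qed

lemma continuous_on_Q_picard: "continuous_on {0..s} (\<lambda>r. Q (picard f k r) x)"
  by (intro continuous_on_Q continuous_on_subset[OF continuous_on_picard]) auto

lemma picard_Suc_diff:
  "picard f (Suc (Suc k)) s x - picard f (Suc k) s x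
     = integral {0..s} (\<lambda>r. Q (picard f (Suc k) r) x - Q (picard f k r) x)"
  unfolding picard_Suc[of f "Suc k" s x] picard_Suc[of f k s x]
  by (simp add: integral_diff integrable_continuous_interval continuous_on_Q_picard)

lemma l1_norm_picard_diff_le:
  assumes "0 \<le> s"
  shows "l1_norm (\<lambda>x. picard f (Suc k) s x - picard f k s x)
           \<le> l1_norm (Q f) * (CARD('x) * lip) ^ k * s ^ Suc k / fact (Suc k)"
  using assms
proof (induction k arbitrary: s)
  case 0
  then show ?case
    by (simp add: picard_Suc l1_norm_def abs_mult flip: sum_distrib_left)
next
  case (Suc k)
  define M where "M = lip * l1_norm (Q f) * (CARD('x) * lip) ^ k / fact (Suc k)"
  have M_integral: "((\<lambda>r. M * r ^ Suc k) has_integral M * s ^ Suc (Suc k) / Suc (Suc k)) {0..s}"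
    using has_integral_mult_right[OF has_integral_power[OF Suc.prems, of "Suc k"], of M] by simp
  have "\<bar>picard f (Suc (Suc k)) s x - picard f (Suc k) s x\<bar>
          \<le> M * s ^ Suc (Suc k) / Suc (Suc k)" for x
  proof -
    have "\<bar>Q (picard f (Suc k) r) x - Q (picard f k r) x\<bar> \<le> M * r ^ Suc k" if "r \<in> {0..s}" for r
    proof -
      have "\<bar>Q (picard f (Suc k) r) x - Q (picard f k r) x\<bar>
              \<le> lip * l1_norm (\<lambda>x. picard f (Suc k) r x - picard f k r x)"
        by (rule Q_lipschitz)
      also have "\<dots> \<le> M * r ^ Suc k"
        using mult_left_mono[OF Suc.IH[of r] lip_nonneg] that by (simp add: M_def)
      finally show ?thesis .
    qed
    then have "\<bar>integral {0..s} (\<lambda>r. Q (picard f (Suc k) r) x - Q (picard f k r) x)\<bar>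
                 \<le> integral {0..s} (\<lambda>r. M * r ^ Suc k)"
      using M_integral unfolding real_norm_def[symmetric]
      by (intro integral_norm_bound_integral)
         (auto intro!: integrable_continuous_interval continuous_intros continuous_on_Q_picard)
    then show ?thesis
      by (simp only: picard_Suc_diff integral_unique[OF M_integral])
  qed
  then have "l1_norm (\<lambda>x. picard f (Suc (Suc k)) s x - picard f (Suc k) s x)
               \<le> CARD('x) * (M * s ^ Suc (Suc k) / Suc (Suc k))"
    by (rule l1_norm_le_card_mult)
  then show ?case
    by (simp add: M_def fact_Suc field_simps)
qed

text \<open>The limit of the Picard iterates, written as a telescoping series so that the
  Weierstrass M-test applies.\<close>
definition picard_limit :: "('x \<Rightarrow> real) \<Rightarrow> real \<Rightarrow> 'x \<Rightarrow> real" where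
  "picard_limit f s x = f x + (\<Sum>i. picard f (Suc i) s x - picard f i s x)"

lemma uniform_limit_picard:
  assumes "0 \<le> T"
  shows "uniform_limit {0..T} (\<lambda>k s. picard f k s x) (\<lambda>s. picard_limit f s x) sequentially"
proof -
  define C where "C = l1_norm (Q f)"
  define L where "L = CARD('x) * lip"
  have "0 \<le> C" "0 \<le> L"
    using lip_nonneg by (auto simp: C_def L_def l1_norm_def intro: sum_nonneg)
  define M where "M i = C * L ^ i * T ^ Suc i / fact (Suc i)" for i
  have "norm (picard f (Suc i) s x - picard f i s x) \<le> M i" if "s \<in> {0..T}" for i s
  proof -
    have "norm (picard f (Suc i) s x - picard f i s x)
            \<le> l1_norm (\<lambda>x. picard f (Suc i) s x - picard f i s x)"
      using abs_le_l1_norm[of "\<lambda>x. picard f (Suc i) s x - picard f i s x" x] by simp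
    also have "\<dots> \<le> C * L ^ i * s ^ Suc i / fact (Suc i)"
      using l1_norm_picard_diff_le[of s f i] that by (simp add: C_def L_def)
    also have "\<dots> \<le> M i"
      unfolding M_def using that \<open>0 \<le> C\<close> \<open>0 \<le> L\<close>
      by (intro divide_right_mono mult_left_mono power_mono mult_nonneg_nonneg) auto
    finally show ?thesis .
  qed
  moreover have "summable M"
  proof (rule summable_comparison_test')
    show "summable (\<lambda>n. C * T * (inverse (fact n) * (L * T) ^ n))"
      by (intro summable_mult summable_exp)
    fix n :: nat
    have "norm (M n) = M n"
      unfolding M_def using \<open>0 \<le> C\<close> \<open>0 \<le> L\<close> \<open>0 \<le> T\<close> by simp
    also have "\<dots> \<le> C * L ^ n * T ^ Suc n / fact n"
      unfolding M_def using \<open>0 \<le> C\<close> \<open>0 \<le> L\<close> \<open>0 \<le> T\<close> fact_mono[of n "Suc n", where 'a=real]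
      by (intro divide_left_mono mult_nonneg_nonneg) auto
    also have "\<dots> = C * T * (inverse (fact n) * (L * T) ^ n)"
      by (simp add: power_mult_distrib field_simps)
    finally show "norm (M n) \<le> C * T * (inverse (fact n) * (L * T) ^ n)" .
  qed
  ultimately have "uniform_limit {0..T} (\<lambda>n s. \<Sum>i<n. picard f (Suc i) s x - picard f i s x)
                     (\<lambda>s. \<Sum>i. picard f (Suc i) s x - picard f i s x) sequentially"
    by (rule Weierstrass_m_test)
  then have "uniform_limit {0..T} (\<lambda>n s. f x + (\<Sum>i<n. picard f (Suc i) s x - picard f i s x))
               (\<lambda>s. picard_limit f s x) sequentially"
    unfolding picard_limit_def by (intro uniform_limit_intros)
  moreover have "f x + (\<Sum>i<n. picard f (Suc i) s x - picard f i s x) = picard f n s x" for n s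
    by (subst sum_lessThan_telescope[where f="\<lambda>i. picard f i s x"]) simp
  ultimately show ?thesis
    by simp
qed

lemma continuous_on_picard_limit: "continuous_on {0..} (\<lambda>s. picard_limit f s x)"
  by (intro continuous_on_atLeast_if_atLeastAtMost uniform_limit_theorem[OF _ uniform_limit_picard])
     (auto intro!: always_eventually continuous_on_subset[OF continuous_on_picard])

lemma picard_limit_integral_eq:
  assumes "0 \<le> s"
  shows "picard_limit f s x = f x + integral {0..s} (\<lambda>r. Q (picard_limit f r) x)"
proof -
  obtain I J where I: "\<And>k. ((\<lambda>r. Q (picard f k r) x) has_integral I k) {0..s}"
    and J: "((\<lambda>r. Q (picard_limit f r) x) has_integral J) {0..s}" and "I \<longlonglongrightarrow> J"
    by (rule uniform_limit_integral[OF uniform_limit_Q[OF uniform_limit_picard[OF assms]]])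
       (auto intro: continuous_on_Q_picard)
  have "(\<lambda>k. picard f (Suc k) s x) \<longlonglongrightarrow> picard_limit f s x"
    by (rule LIMSEQ_Suc, rule tendsto_uniform_limitI[OF uniform_limit_picard[OF assms]]) (use assms in auto)
  moreover have "picard f (Suc k) s x = f x + I k" for k
    using I by (simp add: picard_Suc integral_unique)
  ultimately have "(\<lambda>k. f x + I k) \<longlonglongrightarrow> picard_limit f s x"
    by simp
  moreover have "(\<lambda>k. f x + I k) \<longlonglongrightarrow> f x + J"
    by (intro tendsto_intros \<open>I \<longlonglongrightarrow> J\<close>)
  ultimately show ?thesis
    using J LIMSEQ_unique by (simp add: integral_unique)
qed

lemma is_lower_sol_picard_limit: "is_lower_sol Q f (picard_limit f)"
  unfolding is_lower_sol_def
proof (intro conjI allI impI)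
  show "picard_limit f 0 = f"
    by (auto simp: fun_eq_iff picard_limit_integral_eq)
  fix t :: real and x assume "0 \<le> t"
  have "((\<lambda>s. f x + integral {0..s} (\<lambda>r. Q (picard_limit f r) x))
          has_real_derivative 0 + Q (picard_limit f t) x) (at t within {0..})"
    by (intro derivative_intros integral_has_real_derivative_atLeast
          continuous_on_Q continuous_on_picard_limit \<open>0 \<le> t\<close>)
  then have "((\<lambda>s. f x + integral {0..s} (\<lambda>r. Q (picard_limit f r) x))
          has_real_derivative Q (picard_limit f t) x) (at t within {0..})"
    by simp
  then show "((\<lambda>s. picard_limit f s x) has_real_derivative Q (picard_limit f t) x) (at t within {0..})"
    by (rule has_field_derivative_transform_within[where d=1])
       (use \<open>0 \<le> t\<close> in \<open>auto simp: picard_limit_integral_eq\<close>)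
qed

lemma is_lower_sol_lower_T: "is_lower_sol Q f (\<lambda>s. lower_T Q s f)"
  using someI[of "is_lower_sol Q f", OF is_lower_sol_picard_limit]
  by (simp add: lower_T_def[abs_def])

lemma lower_T_0: "lower_T Q 0 f = f"
  using is_lower_sol_lower_T[of f] unfolding is_lower_sol_def by simp

lemma is_lower_sol_lower_T_shift:
  assumes "0 \<le> a"
  shows "is_lower_sol Q (lower_T Q a f) (\<lambda>s. lower_T Q (a + s) f)"
  unfolding is_lower_sol_def
proof (intro conjI allI impI)
  show "lower_T Q (a + 0) f = lower_T Q a f"
    by simp
  fix t :: real and x assume "0 \<le> t"
  have "((\<lambda>s. lower_T Q s f x) has_real_derivative Q (lower_T Q (a + t) f) x) (at (a + t) within {0..})"
    using is_lower_sol_lower_T[of f] assms \<open>0 \<le> t\<close> unfolding is_lower_sol_def by simp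
  then have "((\<lambda>s. lower_T Q s f x) has_real_derivative Q (lower_T Q (a + t) f) x)
          (at ((\<lambda>s. a + s) t) within ((\<lambda>s. a + s) ` {0..}))"
    by (rule has_field_derivative_subset) (use assms in auto)
  moreover have "((\<lambda>s. a + s) has_real_derivative 1) (at t within {0..})"
    by (rule derivative_eq_intros refl | simp)+
  ultimately show "((\<lambda>s. lower_T Q (a + s) f x) has_real_derivative Q (lower_T Q (a + t) f) x)
                     (at t within {0..})"
    using DERIV_image_chain by (fastforce simp: o_def)
qed

lemma lower_T_add:
  "0 \<le> a \<Longrightarrow> 0 \<le> b \<Longrightarrow> lower_T Q (a + b) f = lower_T Q b (lower_T Q a f)"
  using lower_sol_unique[OF is_lower_sol_lower_T_shift is_lower_sol_lower_T] by simp

lemma lower_T_const: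
  assumes "0 \<le> s"
  shows "lower_T Q s (\<lambda>_. c) = (\<lambda>_. c)"
proof -
  have "is_lower_sol Q (\<lambda>_. c) (\<lambda>_ _. c)"
    by (simp add: is_lower_sol_def Q_const)
  then show ?thesis
    using lower_sol_unique[OF is_lower_sol_lower_T _ assms] by simp
qed

lemma funpow_lower_T: "0 \<le> t \<Longrightarrow> (lower_T Q t ^^ n) f = lower_T Q (n * t) f"
proof (induction n)
  case 0
  then show ?case by (simp add: lower_T_0)
next
  case (Suc n)
  then show ?case
    using lower_T_add[of "n * t" t f] by (simp add: algebra_simps)
qed

lemma lower_T_dist_const_le:
  fixes s t :: real
  assumes "0 < t" "0 \<le> s"
  shows "\<bar>lower_T Q s f x - c\<bar>
           \<le> sqrt (exp (2 * lip * CARD('x) * t) *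
                   (\<Sum>y\<in>UNIV. (lower_T Q (nat \<lfloor>s / t\<rfloor> * t) f y - c)\<^sup>2))"
proof -
  define n where "n = nat \<lfloor>s / t\<rfloor>"
  define r where "r = s - n * t"
  have "n \<le> s / t" "s / t < n + 1"
    using assms by (auto simp: n_def) linarith
  then have "0 \<le> r" "r \<le> t"
    using assms by (auto simp: r_def field_simps)
  have "lower_T Q s f = lower_T Q r (lower_T Q (n * t) f)"
    using lower_T_add[of "n * t" r f] \<open>0 \<le> r\<close> assms by (simp add: r_def)
  moreover have "lower_T Q r (\<lambda>_. c) x = c"
    using lower_T_const[OF \<open>0 \<le> r\<close>] by simp
  ultimately have "\<bar>lower_T Q s f x - c\<bar>
      \<le> sqrt (exp (2 * lip * CARD('x) * r) * (\<Sum>y\<in>UNIV. (lower_T Q (n * t) f y - c)\<^sup>2))"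
    using lower_sol_dist_le[where f="lower_T Q (n * t) f" and g="\<lambda>_. c" and x=x,
        OF is_lower_sol_lower_T is_lower_sol_lower_T \<open>0 \<le> r\<close>]
    by simp
  also have "\<dots> \<le> sqrt (exp (2 * lip * CARD('x) * t) * (\<Sum>y\<in>UNIV. (lower_T Q (n * t) f y - c)\<^sup>2))"
    using \<open>r \<le> t\<close> lip_nonneg
    by (intro real_sqrt_le_mono mult_right_mono sum_nonneg) (auto intro: mult_left_mono)
  finally show ?thesis
    by (simp add: n_def)
qed

lemma ergodic_op_lower_T_if_ergodic_rate:
  assumes "0 < t" "ergodic_rate Q"
  shows "ergodic_op (lower_T Q t)"
  unfolding ergodic_op_def
proof
  fix f
  obtain c where "((\<lambda>s. lower_T Q s f) \<longlongrightarrow> (\<lambda>_. c)) at_top"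
    using assms(2) unfolding ergodic_rate_def by blast
  moreover have "filterlim (\<lambda>n. real n * t) at_top sequentially"
    using filterlim_tendsto_pos_mult_at_top[OF tendsto_const \<open>0 < t\<close> filterlim_real_sequentially]
    by (simp add: mult.commute)
  ultimately have "((\<lambda>n. lower_T Q (real n * t) f) \<longlongrightarrow> (\<lambda>_. c)) sequentially"
    by (rule filterlim_compose)
  then show "\<exists>c. ((\<lambda>n. (lower_T Q t ^^ n) f) \<longlongrightarrow> (\<lambda>_. c)) sequentially"
    using \<open>0 < t\<close> by (auto simp: funpow_lower_T)
qed

lemma ergodic_rate_if_ergodic_op_lower_T:
  assumes "0 < t" "ergodic_op (lower_T Q t)"
  shows "ergodic_rate Q"
  unfolding ergodic_rate_def
proof
  fix f
  obtain c where "((\<lambda>n. (lower_T Q t ^^ n) f) \<longlongrightarrow> (\<lambda>_. c)) sequentially"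
    using assms(2) unfolding ergodic_op_def by blast
  then have converges: "((\<lambda>n. lower_T Q (n * t) f y) \<longlongrightarrow> c) sequentially" for y
    using \<open>0 < t\<close> by (auto simp: funpow_lower_T tendsto_fun_iff)
  have "((\<lambda>n. \<Sum>y\<in>UNIV. (lower_T Q (n * t) f y - c)\<^sup>2) \<longlongrightarrow> (\<Sum>y\<in>(UNIV::'x set). (c - c)\<^sup>2)) sequentially"
    by (intro tendsto_intros converges)
  then have "((\<lambda>n. \<Sum>y\<in>UNIV. (lower_T Q (n * t) f y - c)\<^sup>2) \<longlongrightarrow> 0) sequentially"
    by simp
  moreover have "filterlim (\<lambda>s. nat \<lfloor>s / t\<rfloor>) sequentially at_top"
    using \<open>0 < t\<close> by (rule filterlim_nat_floor_divide_at_top)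
  ultimately have "((\<lambda>s. \<Sum>y\<in>UNIV. (lower_T Q (nat \<lfloor>s / t\<rfloor> * t) f y - c)\<^sup>2) \<longlongrightarrow> 0) at_top"
    using filterlim_compose by fastforce
  then have bound_0: "((\<lambda>s. sqrt (exp (2 * lip * CARD('x) * t) *
                 (\<Sum>y\<in>UNIV. (lower_T Q (nat \<lfloor>s / t\<rfloor> * t) f y - c)\<^sup>2))) \<longlongrightarrow> 0) at_top"
    using tendsto_real_sqrt[OF tendsto_mult_right_zero] by fastforce
  have "((\<lambda>s. lower_T Q s f x - c) \<longlongrightarrow> 0) at_top" for x
    using lower_T_dist_const_le[OF \<open>0 < t\<close>]
    by (intro Lim_null_comparison[OF _ bound_0] eventually_at_top_linorderI[of 0]) simp
  then have "((\<lambda>s. lower_T Q s f x) \<longlongrightarrow> c) at_top" for x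
    by (rule LIM_zero_cancel)
  then show "\<exists>c. ((\<lambda>s. lower_T Q s f) \<longlongrightarrow> (\<lambda>_. c)) at_top"
    by (auto simp: tendsto_fun_iff)
qed

end

theorem proposition9:
  fixes Q :: "('x::finite \<Rightarrow> real) \<Rightarrow> ('x \<Rightarrow> real)" and t :: real
  assumes "lower_rate_op Q" and "t > 0"
  shows "ergodic_rate Q \<longleftrightarrow> ergodic_op (lower_T Q t)"
proof -
  interpret lower_rate_operator Q
    using assms(1) by unfold_locales
  show ?thesis
    using assms(2) ergodic_op_lower_T_if_ergodic_rate ergodic_rate_if_ergodic_op_lower_T by blast
qed

end
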